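(* Let $d\in\mathbb{Z}^+$ and let $\Pi=\langle Q,Q_0,Q_1,q_{init},\delta\rangle$ be a 1-aware population protocol computing the predicate $R(n)=\mathbb{I}\{n\ge d\}$. For $q\in Q$ let $f(q)$ be the minimal $n\in\mathbb{Z}^+$ such that $q$ can occur from $I_n$, and $f(q)=+\infty$ if there is no such $n$. If $a<b$ are two consecutive elements of the set $f(Q)\cap\mathbb{Z}^+$ (i.e. $a,b\in f(Q)\cap\mathbb{Z}^+$ and no element of $f(Q)$ lies strictly between them), then $b\le 2a$.
   Context: A population protocol is a tuple $\Pi=\langle Q,Q_0,Q_1,q_{init},\delta\rangle$ where $Q$ is a finite set of states, $Q=Q_0\sqcup Q_1$ (disjoint union), $q_{init}\in Q$ is the initial state, and $\delta\colon Q^2\to 2^{Q^2}\setminus\{\varnothing\}$ is the transition function. For $n\in\mathbb{Z}^+$, an $n$-size configuration is a function $C\colon[n]\to Q$, where $[n]=\{1,\dots,n\}$; the initial configuration $I_n$ maps every element to $q_{init}$. A pair $(C_1,C_2)$ of $n$-size configurations is a transition if there are distinct $i,j\in[n]$ with $(C_2(i),C_2(j))\in\delta(C_1(i),C_1(j))$ and $C_2(k)=C_1(k)$ for all $k\ne i,j$ (the pair $(i,j)$ is ordered). $D$ is reachable from $C$ if there is a finite sequence $C=C_1,\dots,C_k=D$ ($k\ge1$) of configurations with each $(C_i,C_{i+1})$ a transition. A state $q$ can occur from a configuration $C\colon[n]\to Q$ if some configuration $D$ reachable from $C$ has $D(i)=q$ for some $i\in[n]$. An execution is an infinite sequence $(C_i)_{i\ge1}$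 with $C_1=I_n$ for some $n$ and each $(C_i,C_{i+1})$ a transition; it is fair if whenever a configuration $C$ occurs infinitely often in it and $D$ is reachable from $C$, then $D$ also occurs infinitely often. $\Pi$ is a 1-aware population protocol computing $R\colon\mathbb{Z}^+\to\{0,1\}$ if for every $n\in\mathbb{Z}^+$: if $R(n)=0$ then every configuration $C$ reachable from $I_n$ satisfies $C([n])\subseteq Q_0$; and if $R(n)=1$ then for every fair execution $(C_i)_{i\ge1}$ with $C_1=I_n$ there is $i_0$ such that $C_i([n])\subseteq Q_1$ for all $i\ge i_0$. *)

theory Defs
  imports Main "HOL-Library.Extended_Nat"
begin

text \<open>Agents are indexed by naturals; an n-size
  configuration is a function nat \<Rightarrow> 'q whose relevant values are those on {1..n}
  (values outside {1..n} are never changed by transitions and equal q_init for all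
  configurations reachable from the initial one).\<close>

definition pop_protocol ::
  "'q set \<Rightarrow> 'q set \<Rightarrow> 'q set \<Rightarrow> 'q \<Rightarrow> ('q \<Rightarrow> 'q \<Rightarrow> ('q \<times> 'q) set) \<Rightarrow> bool" where
  "pop_protocol Q Q0 Q1 qi \<delta> \<longleftrightarrow>
     finite Q \<and> Q = Q0 \<union> Q1 \<and> Q0 \<inter> Q1 = {} \<and> qi \<in> Q \<and>
     (\<forall>p\<in>Q. \<forall>q\<in>Q. \<delta> p q \<noteq> {} \<and> \<delta> p q \<subseteq> Q \<times> Q)"

definition init_config :: "'q \<Rightarrow> nat \<Rightarrow> 'q" where
  "init_config qi = (\<lambda>k. qi)"

definition pp_step ::
  "('q \<Rightarrow> 'q \<Rightarrow> ('q \<times> 'q) set) \<Rightarrow> nat \<Rightarrow> (nat \<Rightarrow> 'q) \<Rightarrow> (nat \<Rightarrow> 'q) \<Rightarrow> bool" where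
  "pp_step \<delta> n C1 C2 \<longleftrightarrow>
     (\<exists>i\<in>{1..n}. \<exists>j\<in>{1..n}. i \<noteq> j \<and> (C2 i, C2 j) \<in> \<delta> (C1 i) (C1 j) \<and>
        (\<forall>k. k \<noteq> i \<and> k \<noteq> j \<longrightarrow> C2 k = C1 k))"

definition pp_reach ::
  "('q \<Rightarrow> 'q \<Rightarrow> ('q \<times> 'q) set) \<Rightarrow> nat \<Rightarrow> (nat \<Rightarrow> 'q) \<Rightarrow> (nat \<Rightarrow> 'q) \<Rightarrow> bool" where
  "pp_reach \<delta> n = (pp_step \<delta> n)\<^sup>*\<^sup>*"

definition can_occur ::
  "('q \<Rightarrow> 'q \<Rightarrow> ('q \<times> 'q) set) \<Rightarrow> 'q \<Rightarrow> nat \<Rightarrow> 'q \<Rightarrow> bool" where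
  "can_occur \<delta> qi n q \<longleftrightarrow>
     (\<exists>D. pp_reach \<delta> n (init_config qi) D \<and> (\<exists>i\<in>{1..n}. D i = q))"

definition pp_execution ::
  "('q \<Rightarrow> 'q \<Rightarrow> ('q \<times> 'q) set) \<Rightarrow> 'q \<Rightarrow> nat \<Rightarrow> (nat \<Rightarrow> nat \<Rightarrow> 'q) \<Rightarrow> bool" where
  "pp_execution \<delta> qi n E \<longleftrightarrow>
     E 0 = init_config qi \<and> (\<forall>i. pp_step \<delta> n (E i) (E (Suc i)))"

definition pp_fair ::
  "('q \<Rightarrow> 'q \<Rightarrow> ('q \<times> 'q) set) \<Rightarrow> nat \<Rightarrow> (nat \<Rightarrow> nat \<Rightarrow> 'q) \<Rightarrow> bool" where
  "pp_fair \<delta> n E \<longleftrightarrow>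
     (\<forall>C D. infinite {i. E i = C} \<and> pp_reach \<delta> n C D \<longrightarrow> infinite {i. E i = D})"

definition aware1_computes ::
  "'q set \<Rightarrow> 'q set \<Rightarrow> 'q set \<Rightarrow> 'q \<Rightarrow> ('q \<Rightarrow> 'q \<Rightarrow> ('q \<times> 'q) set) \<Rightarrow> (nat \<Rightarrow> bool) \<Rightarrow> bool" where
  "aware1_computes Q Q0 Q1 qi \<delta> R \<longleftrightarrow>
     pop_protocol Q Q0 Q1 qi \<delta> \<and>
     (\<forall>n\<ge>1.
        (\<not> R n \<longrightarrow> (\<forall>C. pp_reach \<delta> n (init_config qi) C \<longrightarrow> C ` {1..n} \<subseteq> Q0)) \<and>
        (R n \<longrightarrow> (\<forall>E. pp_execution \<delta> qi n E \<and> pp_fair \<delta> n E \<longrightarrow>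
                      (\<exists>i0. \<forall>i\<ge>i0. E i ` {1..n} \<subseteq> Q1))))"

definition first_occ ::
  "('q \<Rightarrow> 'q \<Rightarrow> ('q \<times> 'q) set) \<Rightarrow> 'q \<Rightarrow> 'q \<Rightarrow> enat" where
  "first_occ \<delta> qi q =
     (if \<exists>n\<ge>1. can_occur \<delta> qi n q
      then enat (LEAST n. n \<ge> 1 \<and> can_occur \<delta> qi n q) else \<infinity>)"

end

theory Submission
  imports Defs
begin

text \<open>If a state p can occur from I_m and a state q from I_n, then running both populations
  side by side and letting the two witnesses interact shows that every state produced by a
  transition from (p, q) can occur from I_(m+n); hence f(x) \<le> f(p) + f(q) for such states x.
  If no value of f lies in (a, 2a], the states with f \<le> a are therefore closed under
  transitions, and since they contain q_init, every state that can occur at all has f \<le> a.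
  A state with f = b > 2a would contradict this.\<close>

lemma first_occ_le:
  assumes "can_occur \<delta> qi n q" "n \<ge> 1"
  shows "first_occ \<delta> qi q \<le> enat n"
proof -
  have "(LEAST n. n \<ge> 1 \<and> can_occur \<delta> qi n q) \<le> n"
    by (rule Least_le) (use assms in auto)
  then show ?thesis
    using assms unfolding first_occ_def by auto
qed

lemma first_occ_enatD:
  assumes "first_occ \<delta> qi q = enat n"
  shows "n \<ge> 1 \<and> can_occur \<delta> qi n q"
proof -
  have ex: "\<exists>n\<ge>1. can_occur \<delta> qi n q"
    using assms unfolding first_occ_def by (auto split: if_splits)
  then have "n = (LEAST n. n \<ge> 1 \<and> can_occur \<delta> qi n q)"
    using assms unfolding first_occ_def by auto
  then show ?thesis
    using LeastI_ex[OF ex] by simp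
qed

lemma first_occ_init: "first_occ \<delta> qi qi = enat 1"
proof -
  have "can_occur \<delta> qi 1 qi"
    unfolding can_occur_def pp_reach_def by (auto simp: init_config_def)
  then show ?thesis
    using first_occ_le[of \<delta> qi 1 qi] first_occ_enatD[of \<delta> qi qi]
    by (cases "first_occ \<delta> qi qi") auto
qed

lemma pp_step_mono: "pp_step \<delta> n C D \<Longrightarrow> n \<le> N \<Longrightarrow> pp_step \<delta> N C D"
  unfolding pp_step_def by (meson atLeastAtMost_iff le_trans)

lemma pp_reach_mono: "pp_reach \<delta> n C D \<Longrightarrow> n \<le> N \<Longrightarrow> pp_reach \<delta> N C D"
  unfolding pp_reach_def
  by (induction rule: rtranclp_induct) (auto intro: rtranclp.rtrancl_into_rtrancl pp_step_mono)

lemma pp_reach_outside: "pp_reach \<delta> n C D \<Longrightarrow> k \<notin> {1..n} \<Longrightarrow> D k = C k"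
  unfolding pp_reach_def
proof (induction rule: rtranclp_induct)
  case (step D E)
  then show ?case
    unfolding pp_step_def by metis
qed simp

definition append_config :: "nat \<Rightarrow> (nat \<Rightarrow> 'q) \<Rightarrow> (nat \<Rightarrow> 'q) \<Rightarrow> nat \<Rightarrow> 'q" where
  "append_config n P C = (\<lambda>k. if k \<le> n then P k else C (k - n))"

lemma pp_step_append_config:
  assumes "pp_step \<delta> m C D"
  shows "pp_step \<delta> (n + m) (append_config n P C) (append_config n P D)"
proof -
  obtain i j where ij: "i \<in> {1..m}" "j \<in> {1..m}" "i \<noteq> j" "(D i, D j) \<in> \<delta> (C i) (C j)"
      and same: "\<forall>k. k \<noteq> i \<and> k \<noteq> j \<longrightarrow> D k = C k"
    using assms unfolding pp_step_def by blast
  have "\<forall>k. k \<noteq> i + n \<and> k \<noteq> j + n \<longrightarrow> append_config n P D k = append_config n P C k"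
  proof (intro allI impI)
    fix k assume k: "k \<noteq> i + n \<and> k \<noteq> j + n"
    show "append_config n P D k = append_config n P C k"
    proof (cases "k \<le> n")
      case False
      then have "k - n \<noteq> i \<and> k - n \<noteq> j"
        using k by auto
      then show ?thesis
        using same False by (simp add: append_config_def)
    qed (simp add: append_config_def)
  qed
  moreover have "(append_config n P D (i + n), append_config n P D (j + n))
      \<in> \<delta> (append_config n P C (i + n)) (append_config n P C (j + n))"
    using ij by (simp add: append_config_def)
  moreover have "i + n \<in> {1..n + m}" "j + n \<in> {1..n + m}" "i + n \<noteq> j + n"
    using ij by auto
  ultimately show ?thesis
    unfolding pp_step_def by blast
qed

lemma pp_reach_append_config:
  "pp_reach \<delta> m C D \<Longrightarrow> pp_reach \<delta> (n + m) (append_config n P C) (append_config n P D)"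
  unfolding pp_reach_def
  by (induction rule: rtranclp_induct)
    (auto intro: rtranclp.rtrancl_into_rtrancl pp_step_append_config)

lemma append_config_init:
  "pp_reach \<delta> n (init_config qi) P \<Longrightarrow> append_config n P (init_config qi) = P"
  by (rule ext) (auto simp: append_config_def init_config_def dest: pp_reach_outside)

lemma can_occur_transition:
  assumes "can_occur \<delta> qi m p" "can_occur \<delta> qi n q" "(x, y) \<in> \<delta> p q"
  shows "can_occur \<delta> qi (m + n) x \<and> can_occur \<delta> qi (m + n) y"
proof -
  obtain P i where P: "pp_reach \<delta> m (init_config qi) P" "i \<in> {1..m}" "P i = p"
    using assms(1) unfolding can_occur_def by blast
  obtain C j where C: "pp_reach \<delta> n (init_config qi) C" "j \<in> {1..n}" "C j = q"
    using assms(2) unfolding can_occur_def by blast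
  define E where "E = append_config m P C"
  define F where "F = E(i := x, j + m := y)"
  have "pp_reach \<delta> (m + n) (init_config qi) P"
    using pp_reach_mono[OF P(1)] by simp
  moreover have "pp_reach \<delta> (m + n) P E"
    using pp_reach_append_config[OF C(1), of m P] append_config_init[OF P(1)]
    by (simp add: E_def)
  moreover have "E i = p" "E (j + m) = q"
    using P C by (auto simp: E_def append_config_def)
  then have "pp_step \<delta> (m + n) E F"
    unfolding pp_step_def using P(2) C(2) assms(3)
    by (intro bexI[of _ i] bexI[of _ "j + m"]) (auto simp: F_def)
  ultimately have "pp_reach \<delta> (m + n) (init_config qi) F"
    unfolding pp_reach_def by (meson rtranclp.rtrancl_into_rtrancl rtranclp_trans)
  moreover have "F i = x" "F (j + m) = y" "i \<in> {1..m + n}" "j + m \<in> {1..m + n}"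
    using P(2) C(2) by (auto simp: F_def)
  ultimately show ?thesis
    unfolding can_occur_def by blast
qed

lemma first_occ_transition_le:
  assumes "(x, y) \<in> \<delta> p q"
  shows "first_occ \<delta> qi x \<le> first_occ \<delta> qi p + first_occ \<delta> qi q
    \<and> first_occ \<delta> qi y \<le> first_occ \<delta> qi p + first_occ \<delta> qi q"
proof (cases "first_occ \<delta> qi p = \<infinity> \<or> first_occ \<delta> qi q = \<infinity>")
  case False
  then obtain m n where both: "first_occ \<delta> qi p = enat m" "first_occ \<delta> qi q = enat n"
    by auto
  have "m \<ge> 1" "can_occur \<delta> qi m p" "can_occur \<delta> qi n q"
    using first_occ_enatD[OF both(1)] first_occ_enatD[OF both(2)] by auto
  then have "can_occur \<delta> qi (m + n) x" "can_occur \<delta> qi (m + n) y" "m + n \<ge> 1"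
    using can_occur_transition[where \<delta> = \<delta>, OF _ _ assms] by auto
  then show ?thesis
    using first_occ_le both by fastforce
qed auto

lemma can_occur_in_closed_set:
  assumes "qi \<in> S"
    and closed: "\<And>p q x y. p \<in> S \<Longrightarrow> q \<in> S \<Longrightarrow> (x, y) \<in> \<delta> p q \<Longrightarrow> x \<in> S \<and> y \<in> S"
    and "can_occur \<delta> qi n s"
  shows "s \<in> S"
proof -
  have "\<forall>k. D k \<in> S" if "pp_reach \<delta> n (init_config qi) D" for D
    using that unfolding pp_reach_def
  proof (induction rule: rtranclp_induct)
    case base
    then show ?case using assms(1) by (simp add: init_config_def)
  next
    case (step C D)
    then show ?case
      unfolding pp_step_def by (metis closed)
  qed
  then show ?thesis
    using assms(3) unfolding can_occur_def by blast
qed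

theorem lemma1:
  fixes Q Q0 Q1 :: "'q set" and qi :: 'q and \<delta> :: "'q \<Rightarrow> 'q \<Rightarrow> ('q \<times> 'q) set"
    and d a b :: nat
  assumes "d \<ge> 1"
    and "aware1_computes Q Q0 Q1 qi \<delta> (\<lambda>n. n \<ge> d)"
    and "enat a \<in> first_occ \<delta> qi ` Q" and "enat b \<in> first_occ \<delta> qi ` Q"
    and "a < b"
    and "\<not> (\<exists>q\<in>Q. enat a < first_occ \<delta> qi q \<and> first_occ \<delta> qi q < enat b)"
  shows "b \<le> 2 * a"
proof (rule ccontr)
  assume "\<not> b \<le> 2 * a"
  let ?S = "{s \<in> Q. first_occ \<delta> qi s \<le> enat a}"
  have "pop_protocol Q Q0 Q1 qi \<delta>"
    using assms(2) unfolding aware1_computes_def by blast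
  then have qi: "qi \<in> Q" and into_Q: "\<And>p q. p \<in> Q \<Longrightarrow> q \<in> Q \<Longrightarrow> \<delta> p q \<subseteq> Q \<times> Q"
    unfolding pop_protocol_def by auto
  obtain qa qb where qa: "first_occ \<delta> qi qa = enat a" and qb: "first_occ \<delta> qi qb = enat b"
    using assms(3,4) by auto
  have "a \<ge> 1"
    using first_occ_enatD[OF qa] by blast
  then have "qi \<in> ?S"
    using qi first_occ_init[of \<delta> qi] by simp
  moreover have "x \<in> ?S \<and> y \<in> ?S" if "p \<in> ?S" "q \<in> ?S" "(x, y) \<in> \<delta> p q" for p q x y
  proof -
    have "first_occ \<delta> qi p + first_occ \<delta> qi q < enat b"
      using that(1,2) add_mono[of "first_occ \<delta> qi p" "enat a"] \<open>\<not> b \<le> 2 * a\<close>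
      by (fastforce simp: le_less_trans)
    then show ?thesis
      using first_occ_transition_le[where \<delta> = \<delta> and qi = qi, OF that(3)] into_Q that assms(6)
      by fastforce
  qed
  moreover have "can_occur \<delta> qi b qb"
    using first_occ_enatD[OF qb] by blast
  ultimately have "qb \<in> ?S"
    by (rule can_occur_in_closed_set)
  then show False
    using qb assms(5) by simp
qed

end
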